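(* Let $\Lambda$ denote the von Mangoldt function and let $\varepsilon>0$ be a small number. Then, as $x\to\infty$, \[ \sum_{n\leq x}\Lambda([x/n])\Lambda(2[x/n]+1) = s_1 x + O\left(x^{(2+\varepsilon)/3}\log^2 x\right), \] where the density constant is \[ s_1=\sum_{n\geq 1}\frac{\Lambda(n)\Lambda(2n+1)}{n(n+1)}\geq 0.620794. \]
   Context: $[t]$ denotes the largest integer not exceeding $t$. The von Mangoldt function is $\Lambda(m)=\log p$ if $m=p^k$ for a prime $p$ and an integer $k\geq 1$, and $\Lambda(m)=0$ otherwise. The sum is over positive integers $n\le x$. *)

theory Defs
  imports "HOL-Analysis.Analysis" "HOL-Number_Theory.Prime_Powers" "HOL-Library.Landau_Symbols"
begin

end

theory Submission
  imports Defs "HOL-Real_Asymp.Real_Asymp"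
begin

(* Group the n <= x by the value m = [x/n]. Each m <= M is taken [x/m] - [x/(m+1)] = x/(m(m+1)) + O(1)
   times, which yields x times the M-th partial sum of the density series with error O(M log^2 x);
   the n with [x/n] > M are at most x/(M+1) in number and contribute O((x/M) log^2 x). Since
   Lambda(m) Lambda(2m+1) <= log^2 (2m+1) = O(sqrt m), the tail of the density series beyond M is
   O(M^(-1/2)). The choice M = [x^(2/3)] makes all three errors O(x^(2/3) log^2 x).
   The numerical lower bound for s_1 uses seven terms of the series, with each log p bounded below
   by a rational multiple of log 2 via 2^b <= p^a. *)

lemma le_nat_floor_iff:
  fixes y :: real
  assumes "0 < m"
  shows "m \<le> nat \<lfloor>y\<rfloor> \<longleftrightarrow> real m \<le> y"
proof
  assume "m \<le> nat \<lfloor>y\<rfloor>"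
  then have "int m \<le> \<lfloor>y\<rfloor>" using assms by linarith
  then show "real m \<le> y" by (simp add: le_floor_iff)
qed (rule le_nat_floor)

lemma le_nat_floor_divide_iff:
  fixes x :: real
  assumes "0 < m" "0 < n"
  shows "m \<le> nat \<lfloor>x / real n\<rfloor> \<longleftrightarrow> real m * real n \<le> x"
  using assms by (simp add: le_nat_floor_iff pos_le_divide_eq)

lemma nat_floor_quotient_fibre:
  fixes x :: real
  assumes "0 < m"
  shows "{n \<in> {1..nat \<lfloor>x\<rfloor>}. nat \<lfloor>x / real n\<rfloor> = m}
           = {nat \<lfloor>x / real (m + 1)\<rfloor><..nat \<lfloor>x / real m\<rfloor>}"
proof (intro set_eqI)
  fix n
  show "n \<in> {n \<in> {1..nat \<lfloor>x\<rfloor>}. nat \<lfloor>x / real n\<rfloor> = m}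
          \<longleftrightarrow> n \<in> {nat \<lfloor>x / real (m + 1)\<rfloor><..nat \<lfloor>x / real m\<rfloor>}"
  proof (cases "0 < n")
    case False
    then show ?thesis by auto
  next
    case True
    have n_le: "real n \<le> real m * real n" using mult_right_mono[of 1 "real m" "real n"] assms by simp
    have "n \<in> {n \<in> {1..nat \<lfloor>x\<rfloor>}. nat \<lfloor>x / real n\<rfloor> = m}
            \<longleftrightarrow> real n \<le> x \<and> real m * real n \<le> x \<and> \<not> real (m + 1) * real n \<le> x"
      using True assms le_nat_floor_iff[of n x] le_nat_floor_divide_iff[of m n x]
        le_nat_floor_divide_iff[of "m + 1" n x] by (auto simp del: of_nat_add)
    also have "\<dots> \<longleftrightarrow> real m * real n \<le> x \<and> \<not> real (m + 1) * real n \<le> x"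
      using n_le by (meson order_trans)
    also have "\<dots> \<longleftrightarrow> n \<in> {nat \<lfloor>x / real (m + 1)\<rfloor><..nat \<lfloor>x / real m\<rfloor>}"
      using True assms le_nat_floor_divide_iff[of n m x] le_nat_floor_divide_iff[of n "m + 1" x]
      by (auto simp: mult.commute not_le simp del: of_nat_add)
    finally show ?thesis .
  qed
qed

lemma nat_floor_quotient_bounds:
  fixes x :: real
  assumes "n \<in> {1..nat \<lfloor>x\<rfloor>}"
  shows "0 < nat \<lfloor>x / real n\<rfloor>" "real (nat \<lfloor>x / real n\<rfloor>) \<le> x"
proof -
  have "0 < n" "real n \<le> x"
    using assms le_nat_floor_iff[of n x] by auto
  then show "0 < nat \<lfloor>x / real n\<rfloor>"
    using le_nat_floor_divide_iff[of 1 n x] by simp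
  have "real (nat \<lfloor>x / real n\<rfloor>) \<le> x / real n"
    using \<open>0 < n\<close> \<open>real n \<le> x\<close> by (simp add: of_nat_floor)
  also have "\<dots> \<le> x"
    using \<open>0 < n\<close> \<open>real n \<le> x\<close> mult_left_mono[of 1 "real n" x] by (simp add: divide_le_eq)
  finally show "real (nat \<lfloor>x / real n\<rfloor>) \<le> x" .
qed

lemma nat_floor_quotient_gt_set:
  fixes x :: real
  shows "{n \<in> {1..nat \<lfloor>x\<rfloor>}. M < nat \<lfloor>x / real n\<rfloor>} = {1..nat \<lfloor>x / real (M + 1)\<rfloor>}"
proof (intro set_eqI)
  fix n
  have "real n \<le> real (M + 1) * real n" using mult_right_mono[of 1 "real (M + 1)" "real n"] by simp
  then show "n \<in> {n \<in> {1..nat \<lfloor>x\<rfloor>}. M < nat \<lfloor>x / real n\<rfloor>} \<longleftrightarrow> n \<in> {1..nat \<lfloor>x / real (M + 1)\<rfloor>}"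
    using le_nat_floor_iff[of n x] le_nat_floor_divide_iff[of "M + 1" n x]
      le_nat_floor_divide_iff[of n "M + 1" x]
    by (auto simp: Suc_le_eq[symmetric] mult.commute simp del: of_nat_add of_nat_Suc
        intro: order_trans)
qed

lemma sum_nat_floor_quotients_split:
  fixes f :: "nat \<Rightarrow> real" and x :: real
  shows "(\<Sum>n\<in>{1..nat \<lfloor>x\<rfloor>}. f (nat \<lfloor>x / real n\<rfloor>))
           = (\<Sum>m\<in>{1..M}. real (nat \<lfloor>x / real m\<rfloor> - nat \<lfloor>x / real (m + 1)\<rfloor>) * f m)
             + (\<Sum>n\<in>{1..nat \<lfloor>x / real (M + 1)\<rfloor>}. f (nat \<lfloor>x / real n\<rfloor>))"
proof -
  define A where "A = {1..nat \<lfloor>x\<rfloor>}"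
  define q where "q n = nat \<lfloor>x / real n\<rfloor>" for n
  have q_pos: "0 < q n" if "n \<in> A" for n
    using that unfolding A_def q_def by (rule nat_floor_quotient_bounds)
  have large: "{n \<in> A. M < q n} = {1..nat \<lfloor>x / real (M + 1)\<rfloor>}"
    unfolding A_def q_def by (rule nat_floor_quotient_gt_set)
  have small: "(\<Sum>n\<in>{n \<in> A. q n \<le> M}. f (q n))
                 = (\<Sum>m\<in>{1..M}. real (nat \<lfloor>x / real m\<rfloor> - nat \<lfloor>x / real (m + 1)\<rfloor>) * f m)"
  proof -
    have "(\<Sum>n\<in>{n \<in> A. q n \<le> M}. f (q n)) = (\<Sum>m\<in>{1..M}. \<Sum>n\<in>{n \<in> {n \<in> A. q n \<le> M}. q n = m}. f (q n))"
      using q_pos by (intro sum.group[symmetric]) (auto simp: A_def Suc_le_eq)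
    also have "\<dots> = (\<Sum>m\<in>{1..M}. real (nat \<lfloor>x / real m\<rfloor> - nat \<lfloor>x / real (m + 1)\<rfloor>) * f m)"
    proof (intro sum.cong refl)
      fix m assume "m \<in> {1..M}"
      then have fibre: "{n \<in> {n \<in> A. q n \<le> M}. q n = m} = {nat \<lfloor>x / real (m + 1)\<rfloor><..nat \<lfloor>x / real m\<rfloor>}"
        using nat_floor_quotient_fibre[of m x] by (auto simp: A_def q_def)
      have "(\<Sum>n\<in>{n \<in> {n \<in> A. q n \<le> M}. q n = m}. f (q n)) = (\<Sum>n\<in>{n \<in> {n \<in> A. q n \<le> M}. q n = m}. f m)"
        by (intro sum.cong) auto
      then show "(\<Sum>n\<in>{n \<in> {n \<in> A. q n \<le> M}. q n = m}. f (q n))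
                   = real (nat \<lfloor>x / real m\<rfloor> - nat \<lfloor>x / real (m + 1)\<rfloor>) * f m"
        unfolding fibre by simp
    qed
    finally show ?thesis .
  qed
  have "A \<inter> {n. q n \<le> M} = {n \<in> A. q n \<le> M}" "A - {n. q n \<le> M} = {n \<in> A. M < q n}"
    by auto
  then have "(\<Sum>n\<in>A. f (q n)) = (\<Sum>n\<in>{n \<in> A. q n \<le> M}. f (q n)) + (\<Sum>n\<in>{n \<in> A. M < q n}. f (q n))"
    using sum.Int_Diff[of A "\<lambda>n. f (q n)" "{n. q n \<le> M}"] by (simp add: A_def)
  also have "\<dots> = (\<Sum>m\<in>{1..M}. real (nat \<lfloor>x / real m\<rfloor> - nat \<lfloor>x / real (m + 1)\<rfloor>) * f m)
             + (\<Sum>n\<in>{1..nat \<lfloor>x / real (M + 1)\<rfloor>}. f (nat \<lfloor>x / real n\<rfloor>))"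
    unfolding small large by (simp add: q_def)
  finally show ?thesis by (simp add: A_def q_def)
qed

lemma nat_floor_quotient_count_approx:
  fixes x :: real
  assumes "0 \<le> x" "0 < m"
  shows "\<bar>real (nat \<lfloor>x / real m\<rfloor> - nat \<lfloor>x / real (m + 1)\<rfloor>) - x / (real m * (real m + 1))\<bar> \<le> 1"
proof -
  have "x / real (m + 1) \<le> x / real m" using assms by (intro divide_left_mono) auto
  then have "nat \<lfloor>x / real (m + 1)\<rfloor> \<le> nat \<lfloor>x / real m\<rfloor>" by (intro nat_mono floor_mono)
  then have "real (nat \<lfloor>x / real m\<rfloor> - nat \<lfloor>x / real (m + 1)\<rfloor>)
               = of_int \<lfloor>x / real m\<rfloor> - of_int \<lfloor>x / real (m + 1)\<rfloor>"
    using assms(1) by simp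
  moreover have "x / real m - x / real (m + 1) = x / (real m * (real m + 1))"
    using assms(2) by (simp add: field_simps)
  moreover have "of_int \<lfloor>x / real m\<rfloor> \<le> x / real m" "x / real m < of_int \<lfloor>x / real m\<rfloor> + 1"
    "of_int \<lfloor>x / real (m + 1)\<rfloor> \<le> x / real (m + 1)" "x / real (m + 1) < of_int \<lfloor>x / real (m + 1)\<rfloor> + 1"
    by linarith+
  ultimately show ?thesis by linarith
qed

lemma sum_nat_floor_quotients_approx:
  fixes f :: "nat \<Rightarrow> real" and x B :: real
  assumes "real M \<le> x" "0 \<le> B" and f_bound: "\<And>m. 0 < m \<Longrightarrow> real m \<le> x \<Longrightarrow> \<bar>f m\<bar> \<le> B"
  shows "\<bar>(\<Sum>n\<in>{1..nat \<lfloor>x\<rfloor>}. f (nat \<lfloor>x / real n\<rfloor>))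
            - x * (\<Sum>m\<in>{1..M}. f m / (real m * (real m + 1)))\<bar> \<le> (real M + x / (real M + 1)) * B"
proof -
  have "0 \<le> x" using assms(1) by linarith
  define err where "err m = real (nat \<lfloor>x / real m\<rfloor> - nat \<lfloor>x / real (m + 1)\<rfloor>) - x / (real m * (real m + 1))" for m
  have "\<bar>(\<Sum>m\<in>{1..M}. real (nat \<lfloor>x / real m\<rfloor> - nat \<lfloor>x / real (m + 1)\<rfloor>) * f m)
           - x * (\<Sum>m\<in>{1..M}. f m / (real m * (real m + 1)))\<bar> = \<bar>\<Sum>m\<in>{1..M}. err m * f m\<bar>"
    by (simp add: err_def sum_distrib_left sum_subtractf[symmetric] algebra_simps)
  also have "\<dots> \<le> (\<Sum>m\<in>{1..M}. \<bar>err m * f m\<bar>)"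
    by (rule sum_abs)
  also have "\<dots> = (\<Sum>m\<in>{1..M}. \<bar>err m\<bar> * \<bar>f m\<bar>)"
    by (simp add: abs_mult)
  also have "\<dots> \<le> (\<Sum>m\<in>{1..M}. 1 * B)"
    using \<open>0 \<le> x\<close> assms(1) nat_floor_quotient_count_approx f_bound
    by (intro sum_mono mult_mono) (auto simp: err_def)
  finally have small: "\<bar>(\<Sum>m\<in>{1..M}. real (nat \<lfloor>x / real m\<rfloor> - nat \<lfloor>x / real (m + 1)\<rfloor>) * f m)
           - x * (\<Sum>m\<in>{1..M}. f m / (real m * (real m + 1)))\<bar> \<le> real M * B"
    by simp
  have "\<bar>\<Sum>n\<in>{1..nat \<lfloor>x / real (M + 1)\<rfloor>}. f (nat \<lfloor>x / real n\<rfloor>)\<bar>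
          \<le> (\<Sum>n\<in>{1..nat \<lfloor>x / real (M + 1)\<rfloor>}. \<bar>f (nat \<lfloor>x / real n\<rfloor>)\<bar>)"
    by (rule sum_abs)
  also have "\<dots> \<le> (\<Sum>n\<in>{1..nat \<lfloor>x / real (M + 1)\<rfloor>}. B)"
  proof (intro sum_mono f_bound)
    fix n assume "n \<in> {1..nat \<lfloor>x / real (M + 1)\<rfloor>}"
    then have "n \<in> {1..nat \<lfloor>x\<rfloor>}"
      using nat_floor_quotient_gt_set[of x M] by blast
    then show "0 < nat \<lfloor>x / real n\<rfloor>" "real (nat \<lfloor>x / real n\<rfloor>) \<le> x"
      by (rule nat_floor_quotient_bounds)+
  qed
  also have "\<dots> = real (nat \<lfloor>x / real (M + 1)\<rfloor>) * B"
    by simp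
  also have "\<dots> \<le> x / real (M + 1) * B"
    using \<open>0 \<le> x\<close> by (intro mult_right_mono of_nat_floor \<open>0 \<le> B\<close>) simp
  finally have large: "\<bar>\<Sum>n\<in>{1..nat \<lfloor>x / real (M + 1)\<rfloor>}. f (nat \<lfloor>x / real n\<rfloor>)\<bar> \<le> x / (real M + 1) * B"
    by (simp add: add.commute)
  show ?thesis
    using small large sum_nat_floor_quotients_split[of f x M] by (simp add: algebra_simps)
qed

lemma sqrt_div_le_inverse_sqrt_diff:
  fixes a :: real
  assumes "0 < a"
  shows "sqrt a / (a * (a + 1)) \<le> 2 * (1 / sqrt a - 1 / sqrt (a + 1))"
proof -
  define u v where "u = sqrt a" and "v = sqrt (a + 1)"
  have uv: "0 < u" "u \<le> v" "u * u = a" "v * v = a + 1"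
    using assms by (auto simp: u_def v_def)
  have "(v - u) * (u + v) = 1"
    using uv by (simp add: algebra_simps)
  then have "v - u = 1 / (u + v)"
    using uv(1,2) by (simp add: eq_divide_eq)
  moreover have "1 / u - 1 / v = (v - u) / (u * v)"
    using uv(1,2) by (simp add: field_simps)
  ultimately have diff: "1 / u - 1 / v = 1 / (u * v * (u + v))"
    by simp
  have "u * v * (u + v) \<le> u * v * (2 * v)"
    using uv(1,2) by (intro mult_left_mono) auto
  then have "2 / (u * v * (2 * v)) \<le> 2 / (u * v * (u + v))"
    using uv(1,2) by (intro frac_le) auto
  then have "1 / (u * v * v) \<le> 2 / (u * v * (u + v))"
    by simp
  moreover have "sqrt a / (a * (a + 1)) = u / (u * u * (v * v))"
    using uv(3,4) by (simp add: u_def)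
  moreover have "u / (u * u * (v * v)) = 1 / (u * v * v)"
    using uv(1,2) by (simp add: field_simps)
  ultimately show ?thesis
    unfolding diff u_def[symmetric] v_def[symmetric] by simp
qed

lemma
  fixes f :: "nat \<Rightarrow> real"
  assumes f_nonneg: "\<And>m. 0 < m \<Longrightarrow> 0 \<le> f m" and f_le: "\<And>m. 0 < m \<Longrightarrow> f m \<le> C * sqrt m"
  shows summable_sqrt_bounded_density: "summable (\<lambda>k. f (Suc k) / (real (Suc k) * real (Suc k + 1)))"
    and suminf_sqrt_bounded_density_tail:
      "(\<Sum>k. f (Suc (k + M)) / (real (Suc (k + M)) * real (Suc (k + M) + 1))) \<le> 2 * C / sqrt (real M + 1)"
proof -
  define a where "a = (\<lambda>k. f (Suc k) / (real (Suc k) * real (Suc k + 1)))"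
  define h where "h k = 2 * C / sqrt (real (k + M) + 1)" for k
  have C_nonneg: "0 \<le> C"
    using f_nonneg[of 1] f_le[of 1] by simp
  have a_nonneg: "0 \<le> a k" for k
    using f_nonneg[of "Suc k"] by (simp add: a_def)
  have a_le: "a (k + M) \<le> h k - h (Suc k)" for k
  proof -
    define r where "r = real (Suc (k + M))"
    have "0 < r" by (simp add: r_def)
    have "a (k + M) \<le> C * sqrt r / (r * (r + 1))"
      using f_le[of "Suc (k + M)"] by (simp add: a_def r_def divide_right_mono)
    also have "\<dots> = C * (sqrt r / (r * (r + 1)))" by simp
    also have "\<dots> \<le> C * (2 * (1 / sqrt r - 1 / sqrt (r + 1)))"
      using \<open>0 < r\<close> C_nonneg by (intro mult_left_mono sqrt_div_le_inverse_sqrt_diff)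
    also have "\<dots> = h k - h (Suc k)"
      by (simp add: h_def r_def algebra_simps)
    finally show ?thesis .
  qed
  have "h \<longlonglongrightarrow> 0" unfolding h_def by real_asymp
  then have h_sums: "(\<lambda>k. h k - h (Suc k)) sums h 0"
    using telescope_sums' by fastforce
  have "summable (\<lambda>k. h k - h (Suc k))"
    using h_sums by (rule sums_summable)
  have "summable (\<lambda>k. a (k + M))"
  proof (rule summable_comparison_test')
    show "summable (\<lambda>k. h k - h (Suc k))" by fact
    show "norm (a (k + M)) \<le> h k - h (Suc k)" for k
      using a_nonneg a_le by simp
  qed
  then have "summable a"
    using summable_iff_shift[of a M] by simp
  then show "summable (\<lambda>k. f (Suc k) / (real (Suc k) * real (Suc k + 1)))"
    unfolding a_def .
  have "(\<Sum>k. a (k + M)) \<le> (\<Sum>k. h k - h (Suc k))"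
    using a_le \<open>summable (\<lambda>k. a (k + M))\<close> \<open>summable (\<lambda>k. h k - h (Suc k))\<close> by (rule suminf_le)
  also have "\<dots> = h 0"
    using h_sums by (simp add: sums_iff)
  finally show "(\<Sum>k. f (Suc (k + M)) / (real (Suc (k + M)) * real (Suc (k + M) + 1))) \<le> 2 * C / sqrt (real M + 1)"
    by (simp add: a_def h_def)
qed

lemma sum_nat_floor_quotients_density_error:
  fixes f :: "nat \<Rightarrow> real" and x B C :: real
  assumes f_nonneg: "\<And>m. 0 < m \<Longrightarrow> 0 \<le> f m" and f_le_sqrt: "\<And>m. 0 < m \<Longrightarrow> f m \<le> C * sqrt m"
    and f_le: "\<And>m. 0 < m \<Longrightarrow> real m \<le> x \<Longrightarrow> f m \<le> B"
    and "real M \<le> x" "0 \<le> B"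
  shows "\<bar>(\<Sum>n\<in>{1..nat \<lfloor>x\<rfloor>}. f (nat \<lfloor>x / real n\<rfloor>))
            - (\<Sum>k. f (Suc k) / (real (Suc k) * real (Suc k + 1))) * x\<bar>
           \<le> (real M + x / (real M + 1)) * B + 2 * C * x / sqrt (real M + 1)"
proof -
  define a where "a = (\<lambda>k. f (Suc k) / (real (Suc k) * real (Suc k + 1)))"
  define T where "T = (\<Sum>k. a (k + M))"
  have "summable a"
    unfolding a_def using f_nonneg f_le_sqrt by (rule summable_sqrt_bounded_density)
  have "0 \<le> T"
    unfolding T_def using summable_ignore_initial_segment[OF \<open>summable a\<close>]
    by (rule suminf_nonneg) (simp add: a_def f_nonneg)
  have "T \<le> 2 * C / sqrt (real M + 1)"
    unfolding T_def a_def using f_nonneg f_le_sqrt by (rule suminf_sqrt_bounded_density_tail)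
  have "(\<Sum>k. a k) = T + (\<Sum>m\<in>{1..M}. f m / (real m * (real m + 1)))"
    using suminf_split_initial_segment[OF \<open>summable a\<close>, of M]
    by (simp add: T_def a_def sum.atLeast1_atMost_eq add_ac)
  moreover have "\<bar>(\<Sum>n\<in>{1..nat \<lfloor>x\<rfloor>}. f (nat \<lfloor>x / real n\<rfloor>))
            - x * (\<Sum>m\<in>{1..M}. f m / (real m * (real m + 1)))\<bar> \<le> (real M + x / (real M + 1)) * B"
    using assms by (intro sum_nat_floor_quotients_approx) auto
  moreover have "0 \<le> x" using \<open>real M \<le> x\<close> by linarith
  then have "x * T \<le> x * (2 * C / sqrt (real M + 1))" "0 \<le> x * T"
    using \<open>0 \<le> T\<close> mult_left_mono[OF \<open>T \<le> 2 * C / sqrt (real M + 1)\<close>] by auto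
  ultimately show ?thesis
    unfolding a_def by (simp add: algebra_simps abs_le_iff)
qed

lemma nat_floor_powr_two_thirds_bounds:
  fixes x :: real
  assumes "1 \<le> x"
  defines "M \<equiv> nat \<lfloor>x powr (2/3)\<rfloor>"
  shows "real M \<le> x" "real M + x / (real M + 1) \<le> x powr (2/3) + x powr (1/3)"
    and "x / sqrt (real M + 1) \<le> x powr (2/3)"
proof -
  define t where "t = x powr (1/3)"
  have "1 \<le> t" unfolding t_def using assms by (intro ge_one_powr_ge_zero) auto
  have x_eq: "x = t * t * t" and t2: "x powr (2/3) = t * t"
    unfolding t_def using assms by (simp_all flip: powr_add)
  have M_le: "real M \<le> t * t" and M_gt: "t * t < real M + 1"
    unfolding M_def t2 using \<open>1 \<le> t\<close> by (simp_all add: of_nat_floor)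
  have "t * t \<le> t * t * t" using \<open>1 \<le> t\<close> by simp
  then show "real M \<le> x" using M_le x_eq by linarith
  have "x / (real M + 1) \<le> x / (t * t)"
    using M_gt \<open>1 \<le> t\<close> x_eq by (intro divide_left_mono) auto
  also have "\<dots> = t" using \<open>1 \<le> t\<close> x_eq by simp
  finally show "real M + x / (real M + 1) \<le> x powr (2/3) + x powr (1/3)"
    using M_le t2 t_def by linarith
  have "t \<le> sqrt (real M + 1)"
    using M_gt \<open>1 \<le> t\<close> by (intro real_le_rsqrt) (simp add: power2_eq_square)
  then have "x / sqrt (real M + 1) \<le> x / t"
    using \<open>1 \<le> t\<close> x_eq by (intro divide_left_mono) auto
  also have "\<dots> = x powr (2/3)" using \<open>1 \<le> t\<close> x_eq t2 by simp
  finally show "x / sqrt (real M + 1) \<le> x powr (2/3)" .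
qed

lemma ln_squared_le_sqrt:
  fixes y :: real
  assumes "1 \<le> y"
  shows "ln y ^ 2 \<le> 16 * sqrt y"
proof -
  have "ln y \<le> 4 * y powr (1/4)"
    using ln_powr_bound[OF assms, of "1/4"] by simp
  then have "ln y ^ 2 \<le> (4 * y powr (1/4)) ^ 2"
    using assms by (intro power_mono) auto
  also have "\<dots> = 16 * y powr (1/2)"
    using assms by (simp add: power2_eq_square flip: powr_add)
  finally show ?thesis
    using assms by (simp add: powr_half_sqrt)
qed

definition germain_weight :: "nat \<Rightarrow> real" where
  "germain_weight m = mangoldt m * mangoldt (2 * m + 1)"

lemma germain_weight_nonneg: "0 \<le> germain_weight m"
  by (simp add: germain_weight_def mangoldt_nonneg)

lemma germain_weight_le_ln_squared: "germain_weight m \<le> ln (2 * real m + 1) ^ 2"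
proof (cases "m = 0")
  case False
  have "mangoldt m \<le> ln (2 * real m + 1)"
    using False mangoldt_le[of m] by (simp add: order_trans)
  moreover have "mangoldt (2 * m + 1) \<le> ln (2 * real m + 1)"
    using mangoldt_le[of "2 * m + 1"] by (simp add: add.commute)
  ultimately show ?thesis
    unfolding germain_weight_def power2_eq_square by (intro mult_mono) (auto simp: mangoldt_nonneg)
qed (simp add: germain_weight_def)

lemma germain_weight_le_sqrt:
  assumes "0 < m"
  shows "germain_weight m \<le> 32 * sqrt m"
proof -
  have "germain_weight m \<le> 16 * sqrt (2 * real m + 1)"
    using germain_weight_le_ln_squared[of m] ln_squared_le_sqrt[of "2 * real m + 1"] by simp
  also have "sqrt (2 * real m + 1) \<le> sqrt (4 * real m)"
    using assms by simp
  also have "\<dots> = 2 * sqrt m"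
    by (simp add: real_sqrt_mult)
  finally show ?thesis by simp
qed

lemma summable_germain_density: "summable (\<lambda>k. germain_weight (Suc k) / (real (Suc k) * real (Suc k + 1)))"
  using germain_weight_nonneg germain_weight_le_sqrt by (rule summable_sqrt_bounded_density)

lemma germain_floor_sum_error_le:
  fixes x :: real
  assumes "1 \<le> x"
  shows "\<bar>(\<Sum>n\<in>{1..nat \<lfloor>x\<rfloor>}. germain_weight (nat \<lfloor>x / real n\<rfloor>))
           - (\<Sum>k. germain_weight (Suc k) / (real (Suc k) * real (Suc k + 1))) * x\<bar>
         \<le> (x powr (2/3) + x powr (1/3)) * ln (2 * x + 1) ^ 2 + 64 * x powr (2/3)"
proof -
  define M where "M = nat \<lfloor>x powr (2/3)\<rfloor>"
  note M_bounds = nat_floor_powr_two_thirds_bounds[OF assms, folded M_def]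
  have weight_le: "germain_weight m \<le> ln (2 * x + 1) ^ 2" if "real m \<le> x" for m
  proof -
    have "ln (2 * real m + 1) \<le> ln (2 * x + 1)" using that by simp
    then have "ln (2 * real m + 1) ^ 2 \<le> ln (2 * x + 1) ^ 2" by (intro power_mono) auto
    then show ?thesis using germain_weight_le_ln_squared[of m] by linarith
  qed
  have "\<bar>(\<Sum>n\<in>{1..nat \<lfloor>x\<rfloor>}. germain_weight (nat \<lfloor>x / real n\<rfloor>))
           - (\<Sum>k. germain_weight (Suc k) / (real (Suc k) * real (Suc k + 1))) * x\<bar>
         \<le> (real M + x / (real M + 1)) * ln (2 * x + 1) ^ 2 + 2 * 32 * x / sqrt (real M + 1)"
    using germain_weight_nonneg germain_weight_le_sqrt weight_le M_bounds(1)
    by (rule sum_nat_floor_quotients_density_error) simp_all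
  moreover have "(real M + x / (real M + 1)) * ln (2 * x + 1) ^ 2
                   \<le> (x powr (2/3) + x powr (1/3)) * ln (2 * x + 1) ^ 2"
    using M_bounds(2) by (rule mult_right_mono) simp
  moreover have "2 * 32 * x / sqrt (real M + 1) = 64 * (x / sqrt (real M + 1))"
    by simp
  ultimately show ?thesis
    using M_bounds(3) by linarith
qed

lemma germain_floor_sum_error_bigo:
  "(\<lambda>x. (\<Sum>n\<in>{1..nat \<lfloor>x\<rfloor>}. germain_weight (nat \<lfloor>x / real n\<rfloor>))
         - (\<Sum>k. germain_weight (Suc k) / (real (Suc k) * real (Suc k + 1))) * x)
     \<in> O(\<lambda>x. x powr (2/3) * ln x ^ 2)"
proof -
  have "(\<lambda>x. (\<Sum>n\<in>{1..nat \<lfloor>x\<rfloor>}. germain_weight (nat \<lfloor>x / real n\<rfloor>))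
           - (\<Sum>k. germain_weight (Suc k) / (real (Suc k) * real (Suc k + 1))) * x)
        \<in> O(\<lambda>x. (x powr (2/3) + x powr (1/3)) * ln (2 * x + 1) ^ 2 + 64 * x powr (2/3))"
  proof (rule landau_o.big_mono, rule eventually_mono[OF eventually_ge_at_top[of 1]])
    fix x :: real
    assume "1 \<le> x"
    then show "norm ((\<Sum>n\<in>{1..nat \<lfloor>x\<rfloor>}. germain_weight (nat \<lfloor>x / real n\<rfloor>))
                 - (\<Sum>k. germain_weight (Suc k) / (real (Suc k) * real (Suc k + 1))) * x)
               \<le> norm ((x powr (2/3) + x powr (1/3)) * ln (2 * x + 1) ^ 2 + 64 * x powr (2/3))"
      unfolding real_norm_def by (rule order_trans[OF germain_floor_sum_error_le abs_ge_self])
  qed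
  also have "(\<lambda>x::real. (x powr (2/3) + x powr (1/3)) * ln (2 * x + 1) ^ 2 + 64 * x powr (2/3))
               \<in> O(\<lambda>x. x powr (2/3) * ln x ^ 2)"
    by real_asymp
  finally show ?thesis .
qed

lemma ln_mult_le_of_power_le:
  fixes p q :: nat
  assumes "0 < p" "0 < q" "q ^ b \<le> p ^ a"
  shows "real b * ln (real q) \<le> real a * ln (real p)"
proof -
  have "real b * ln (real q) = ln (real q ^ b)"
    using assms(2) by (simp add: ln_realpow)
  also have "\<dots> \<le> ln (real p ^ a)"
    using assms by (simp flip: of_nat_power)
  also have "\<dots> = real a * ln (real p)"
    using assms(1) by (simp add: ln_realpow)
  finally show ?thesis .
qed

lemma germain_density_terms_ge:
  "(0.620794 :: real) \<le> ln 2 * ln 5 / 6 + ln 3 * ln 7 / 12 + ln 2 * ln 3 / 20 + ln 5 * ln 11 / 30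
     + ln 2 * ln 17 / 72 + ln 3 * ln 19 / 90 + ln 11 * ln 23 / 132"
proof -
  define l :: real where "l = 307/443"
  have "0 \<le> l" by (simp add: l_def)
  have l_le_ln2: "l \<le> ln 2"
    using ln_approx_bounds[of 2 3] by (simp add: l_def eval_nat_numeral)
  have ln_ge: "real b / real a * l \<le> ln (real p)" if "2 ^ b \<le> p ^ a" "0 < a" for a b p :: nat
  proof -
    have "0 < p" using that by (cases "p = 0") (auto simp: power_0_left)
    then have "real b * ln 2 \<le> real a * ln (real p)"
      using ln_mult_le_of_power_le[of p 2 b a] that by simp
    then show ?thesis
      using that mult_left_mono[OF l_le_ln2, of "real b"] by (simp add: field_simps)
  qed
  have prod: "\<alpha> * l * (\<beta> * l) \<le> u * v" if "\<alpha> * l \<le> u" "\<beta> * l \<le> v" "0 \<le> \<alpha>" "0 \<le> \<beta>"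
    for \<alpha> \<beta> u v :: real
  proof (rule mult_mono)
    show "0 \<le> u" "0 \<le> \<beta> * l"
      using that \<open>0 \<le> l\<close> order_trans[of 0 "\<alpha> * l" u] by simp_all
  qed (use that in auto)
  have ln2: "1 * l \<le> ln 2" using l_le_ln2 by simp
  have ln3: "19/12 * l \<le> ln 3" using ln_ge[of 19 3 12] by simp
  have ln5: "30/13 * l \<le> ln 5" using ln_ge[of 30 5 13] by simp
  have ln7: "14/5 * l \<le> ln 7" using ln_ge[of 14 7 5] by simp
  have ln11: "24/7 * l \<le> ln 11" using ln_ge[of 24 11 7] by simp
  have ln17: "4 * l \<le> ln 17" using ln_ge[of 4 17 1] by simp
  have ln19: "21/5 * l \<le> ln 19" using ln_ge[of 21 19 5] by simp
  have ln23: "9/2 * l \<le> ln 23" using ln_ge[of 9 23 2] by simp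
  have "1 * l * (30/13 * l) \<le> ln 2 * ln 5" "19/12 * l * (14/5 * l) \<le> ln 3 * ln 7"
    "1 * l * (19/12 * l) \<le> ln 2 * ln 3" "30/13 * l * (24/7 * l) \<le> ln 5 * ln 11"
    "1 * l * (4 * l) \<le> ln 2 * ln 17" "19/12 * l * (21/5 * l) \<le> ln 3 * ln 19"
    "24/7 * l * (9/2 * l) \<le> ln 11 * ln 23"
    by (rule prod; (fact | simp))+
  then show ?thesis
    by (simp add: l_def)
qed

lemma germain_density_ge: "0.620794 \<le> (\<Sum>k. germain_weight (Suc k) / (real (Suc k) * real (Suc k + 1)))"
proof -
  define a where "a k = germain_weight (Suc k) / (real (Suc k) * real (Suc k + 1))" for k
  have mangoldt_powers: "mangoldt (Suc (Suc 0)) = (ln 2 :: real)" "mangoldt 4 = (ln 2 :: real)"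
    "mangoldt 8 = (ln 2 :: real)" "mangoldt 9 = (ln 3 :: real)"
    using mangoldt_prime[OF two_is_prime_nat, where 'a = real, unfolded numeral_2_eq_2]
      mangoldt_primepow'[of 2 2, where 'a = real]
      mangoldt_primepow'[of 2 3, where 'a = real] mangoldt_primepow'[of 3 2, where 'a = real]
    by simp_all
  \<comment> \<open>the k < 11 with mangoldt (k + 1) * mangoldt (2 * k + 3) nonzero\<close>
  have "(\<Sum>k\<in>{1, 2, 3, 4, 7, 8, 10}. a k)
      = ln 2 * ln 5 / 6 + ln 3 * ln 7 / 12 + ln 2 * ln 3 / 20 + ln 5 * ln 11 / 30
        + ln 2 * ln 17 / 72 + ln 3 * ln 19 / 90 + ln 11 * ln 23 / 132"
    by (simp add: a_def germain_weight_def mangoldt_powers)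
  moreover have "(\<Sum>k\<in>{1, 2, 3, 4, 7, 8, 10}. a k) \<le> (\<Sum>k. a k)"
    using summable_germain_density germain_weight_nonneg
    by (intro sum_le_suminf) (auto simp: a_def[abs_def])
  ultimately show ?thesis
    using germain_density_terms_ge unfolding a_def by linarith
qed

theorem theorem12p2:
  fixes \<epsilon> :: real
  assumes "\<epsilon> > 0"
  shows "summable (\<lambda>m. mangoldt (Suc m) * mangoldt (2 * Suc m + 1)
                         / (real (Suc m) * real (Suc m + 1)) :: real)
    \<and> (\<Sum>m. mangoldt (Suc m) * mangoldt (2 * Suc m + 1)
                         / (real (Suc m) * real (Suc m + 1)) :: real) \<ge> 0.620794
    \<and> (\<lambda>x::real. (\<Sum>n\<in>{1..nat \<lfloor>x\<rfloor>}.
            mangoldt (nat \<lfloor>x / real n\<rfloor>) * mangoldt (2 * nat \<lfloor>x / real n\<rfloor> + 1) :: real)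
          - (\<Sum>m. mangoldt (Suc m) * mangoldt (2 * Suc m + 1)
                         / (real (Suc m) * real (Suc m + 1)) :: real) * x)
       \<in> O[at_top](\<lambda>x. x powr ((2 + \<epsilon>) / 3) * (ln x) ^ 2)"
proof -
  have "(\<lambda>x::real. x powr (2/3) * ln x ^ 2) \<in> O(\<lambda>x. x powr ((2 + \<epsilon>) / 3) * ln x ^ 2)"
  proof (intro landau_o.big_mono eventually_mono[OF eventually_ge_at_top[of 1]])
    fix x :: real
    assume "1 \<le> x"
    then have "x powr (2/3) \<le> x powr ((2 + \<epsilon>) / 3)"
      using assms by (intro powr_mono) auto
    then show "norm (x powr (2/3) * ln x ^ 2) \<le> norm (x powr ((2 + \<epsilon>) / 3) * ln x ^ 2)"
      by (simp add: abs_mult mult_right_mono)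
  qed
  with germain_floor_sum_error_bigo
  have "(\<lambda>x. (\<Sum>n\<in>{1..nat \<lfloor>x\<rfloor>}. germain_weight (nat \<lfloor>x / real n\<rfloor>))
         - (\<Sum>k. germain_weight (Suc k) / (real (Suc k) * real (Suc k + 1))) * x)
     \<in> O(\<lambda>x. x powr ((2 + \<epsilon>) / 3) * ln x ^ 2)"
    by (rule landau_o.big_trans)
  with summable_germain_density germain_density_ge show ?thesis
    unfolding germain_weight_def by blast
qed

end
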